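(* Let $\mathcal{D}$ be a dyadic grid and $j\in\mathbb{Z}_+$. There exists $C>0$, independent of $j$ and $f$, such that for every $f\in L^1(\mathbb{R}^d)$, \[ \sup_{\lambda>0}\lambda\,\big|\{x\in\mathbb{R}^d: S_j^{\mathcal{D}}f(x)>\lambda\}\big|\le C(1+j)\|f\|_{L^1}, \] where $\big(S_j^{\mathcal{D}}f(x)\big)^2=\sum_{Q\in\mathcal{D}}\sum_{P\in\mathcal{D},\,P\subset Q,\,\ell P=2^{-j}\ell Q}\frac{\langle f,h_P\rangle^2}{|P|}\mathbf{1}_P(x)$. In particular $\|S_j^{\mathcal{D}}\|_{L^1\to L^{1,\infty}}$ grows at most polynomially in $j$.
   Context: A dyadic grid is the standard grid $\bigcup_j\{2^{-j}([0,1)^d+m):m\in\mathbb{Z}^d\}$ or a translate of it by $\omega\in(\{0,1\}^d)^{\mathbb{Z}}$. For a dyadic cube $P=P_1\times\dots\times P_d$, the Haar functions are $h_P^\epsilon=\prod_ih_{P_i}^{\epsilon_i}$, $\epsilon\in\{0,1\}^d\setminus\{0\}^d$, where $h_I^0=|I|^{-1/2}\mathbf{1}_I$, $h_I^1=|I|^{-1/2}(\mathbf{1}_{I^-}-\mathbf{1}_{I^+})$; $\langle f,h_P\rangle^2:=\sum_\epsilon\langle f,h_P^\epsilon\rangle^2$. *)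

theory Defs
  imports "HOL-Analysis.Analysis"
begin

text \<open>Dimension d = CARD('n); points of R^d are of type real^'n.
  A dyadic grid is parametrised by omega :: int => ('n => bool), i.e. omega in ({0,1}^d)^Z
  (True = 1). The standard grid is omega = (\<lambda>_ _. False).\<close>

definition sidelen :: "int \<Rightarrow> real" where
  "sidelen k = 2 powr (- real_of_int k)"

definition grid_shift :: "(int \<Rightarrow> 'n \<Rightarrow> bool) \<Rightarrow> int \<Rightarrow> 'n \<Rightarrow> real" where
  "grid_shift \<omega> k i = (\<Sum>n. 2 powr (- real_of_int (k + 1 + int n)) *
                           (if \<omega> (k + 1 + int n) i then 1 else 0))"

definition cube_corner :: "(int \<Rightarrow> 'n \<Rightarrow> bool) \<Rightarrow> int \<Rightarrow> ('n \<Rightarrow> int) \<Rightarrow> 'n \<Rightarrow> real" where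
  "cube_corner \<omega> k m i = sidelen k * real_of_int (m i) + grid_shift \<omega> k i"

definition dcube :: "(int \<Rightarrow> 'n \<Rightarrow> bool) \<Rightarrow> int \<Rightarrow> ('n \<Rightarrow> int) \<Rightarrow> (real^'n) set" where
  "dcube \<omega> k m = {x. \<forall>i. cube_corner \<omega> k m i \<le> x $ i \<and> x $ i < cube_corner \<omega> k m i + sidelen k}"

definition cube_vol :: "int \<Rightarrow> real" where
  "cube_vol k = sidelen k ^ CARD('n)" for dummy :: "'n itself"

definition haar1 :: "real \<Rightarrow> real \<Rightarrow> bool \<Rightarrow> real \<Rightarrow> real" where
  "haar1 a l e t = l powr (-1/2) *
     (if e then indicator {a..<a + l/2} t - indicator {a + l/2..<a + l} t
      else indicator {a..<a + l} t)"

definition haar :: "(int \<Rightarrow> 'n::finite \<Rightarrow> bool) \<Rightarrow> int \<Rightarrow> ('n \<Rightarrow> int) \<Rightarrow> ('n \<Rightarrow> bool) \<Rightarrow> real^'n \<Rightarrow> real" where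
  "haar \<omega> k m \<epsilon> x = (\<Prod>i\<in>UNIV. haar1 (cube_corner \<omega> k m i) (sidelen k) (\<epsilon> i) (x $ i))"

definition haar_coeff_sq :: "(int \<Rightarrow> 'n::finite \<Rightarrow> bool) \<Rightarrow> (real^'n \<Rightarrow> real) \<Rightarrow> int \<Rightarrow> ('n \<Rightarrow> int) \<Rightarrow> real" where
  "haar_coeff_sq \<omega> f k m =
     (\<Sum>\<epsilon> \<in> {\<epsilon>::'n \<Rightarrow> bool. \<epsilon> \<noteq> (\<lambda>_. False)}.
        (integral\<^sup>L lebesgue (\<lambda>x. f x * haar \<omega> k m \<epsilon> x))\<^sup>2)"

definition esqrt :: "ennreal \<Rightarrow> ennreal" where
  "esqrt s = (if s = top then top else ennreal (sqrt (enn2real s)))"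

text \<open>(S_j f(x))^2 = sum_{Q in D} sum_{P in D, P subset Q, l(P) = 2^(-j) l(Q)} <f,h_P>^2/|P| 1_P(x).
  Cubes are indexed by (generation, integer index); Q = (k, m), P = (k', m').\<close>
definition Sj :: "(int \<Rightarrow> 'n::finite \<Rightarrow> bool) \<Rightarrow> nat \<Rightarrow> (real^'n \<Rightarrow> real) \<Rightarrow> real^'n \<Rightarrow> ennreal" where
  "Sj \<omega> j f x = esqrt (\<Sum>\<^sub>\<infinity> (Q, P) \<in>
       {((k, m), (k', m')). dcube \<omega> k' m' \<subseteq> dcube \<omega> k m \<and>
                            sidelen k' = 2 powr (- real j) * sidelen k}.
       ennreal (haar_coeff_sq \<omega> f (fst P) (snd P) / cube_vol TYPE('n) (fst P))
         * indicator (dcube \<omega> (fst P) (snd P)) x)"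

end

(*
  Every dyadic cube P has exactly one ancestor Q with side length 2^j times that of P, so S_j f is
  dominated pointwise by the full dyadic square function S f = (sum_P <f,h_P>^2 / |P| 1_P)^(1/2), and
  it suffices to show that S is of weak type (1,1); the resulting constant 1 + 2^d does not depend on j.

  Fix lam > 0 and stop at the dyadic cubes on which the average of |f| exceeds lam. The maximal stopped
  cubes are disjoint and cover Omega, the union of all stopped cubes, so |Omega| <= ||f||_1 / lam. Off
  Omega only good cubes (no ancestor stopped) contribute to S f. For every cube Q, Parseval's identity
  on the span of the indicators of its children gives
    <f,h_Q>^2 + (int_Q f)^2 / |Q| = sum over the children R of Q of (int_R f)^2 / |R|,
  which telescopes when summed over the good cubes of successive generations. What remains are the
  energies (int_R f)^2 / |R| of disjoint cubes R whose parent is not stopped, each at most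
  2^d lam int_R |f|. Hence the integral of (S f)^2 over the complement of Omega is at most
  2^d lam ||f||_1, and Chebyshev's inequality gives |{S f > lam}| <= (1 + 2^d) ||f||_1 / lam.
*)

theory Submission
  imports Defs
begin

(* The library fact summable_on_ennreal is, through an implicit coercion, only about
   enat-valued functions. *)
lemma ennreal_summable_on [simp]: "(g :: 'a \<Rightarrow> ennreal) summable_on A"
  by (rule nonneg_summable_on_complete) simp

lemma sum_le_infsum_ennreal:
  fixes g :: "'a \<Rightarrow> ennreal"
  assumes "finite F" and "F \<subseteq> A"
  shows "sum g F \<le> infsum g A"
proof -
  have "sum g F = infsum g F"
    using assms(1) by simp
  also have "\<dots> \<le> infsum g A"
    by (rule infsum_mono_neutral) (use assms(2) in auto)
  finally show ?thesis .
qed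

lemma infsum_ennreal_SUP_from_nat:
  fixes g :: "'a::countable \<Rightarrow> ennreal"
  shows "infsum g UNIV = (SUP n. \<Sum>x\<in>from_nat ` {..<n}. g x)"
proof (rule antisym)
  show "infsum g UNIV \<le> (SUP n. \<Sum>x\<in>from_nat ` {..<n}. g x)"
  proof (rule infsum_le_finite_sums)
    fix F :: "'a set" assume "finite F"
    define n where "n = Suc (Max (insert 0 (to_nat ` F)))"
    have "F \<subseteq> from_nat ` {..<n}"
    proof
      fix x assume "x \<in> F"
      then have "to_nat x < n"
        unfolding n_def using \<open>finite F\<close> by (simp add: le_imp_less_Suc)
      then show "x \<in> from_nat ` {..<n}"
        by (intro image_eqI[of _ _ "to_nat x"]) auto
    qed
    then have "sum g F \<le> (\<Sum>x\<in>from_nat ` {..<n}. g x)"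
      by (intro sum_mono2) auto
    also have "\<dots> \<le> (SUP n. \<Sum>x\<in>from_nat ` {..<n}. g x)"
      by (rule SUP_upper) simp
    finally show "sum g F \<le> (SUP n. \<Sum>x\<in>from_nat ` {..<n}. g x)" .
  qed simp
  show "(SUP n. \<Sum>x\<in>from_nat ` {..<n}. g x) \<le> infsum g UNIV"
    by (rule SUP_least, rule sum_le_infsum_ennreal) auto
qed

lemma borel_measurable_infsum_ennreal[measurable (raw)]:
  fixes g :: "'a::countable \<Rightarrow> 'b \<Rightarrow> ennreal"
  assumes [measurable]: "\<And>i. g i \<in> borel_measurable M"
  shows "(\<lambda>x. infsum (\<lambda>i. g i x) UNIV) \<in> borel_measurable M"
  unfolding infsum_ennreal_SUP_from_nat by measurable

lemma nn_integral_infsum: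
  fixes g :: "'a::countable \<Rightarrow> 'b \<Rightarrow> ennreal"
  assumes [measurable]: "\<And>i. g i \<in> borel_measurable M"
  shows "(\<integral>\<^sup>+x. infsum (\<lambda>i. g i x) UNIV \<partial>M) = infsum (\<lambda>i. \<integral>\<^sup>+x. g i x \<partial>M) UNIV"
proof -
  have "incseq (\<lambda>n x. \<Sum>i\<in>from_nat ` {..<n}. g i x)"
    by (intro incseq_SucI le_funI sum_mono2) auto
  then have "(\<integral>\<^sup>+x. (SUP n. \<Sum>i\<in>from_nat ` {..<n}. g i x) \<partial>M)
      = (SUP n. \<integral>\<^sup>+x. (\<Sum>i\<in>from_nat ` {..<n}. g i x) \<partial>M)"
    by (intro nn_integral_monotone_convergence_SUP) measurable
  also have "\<dots> = (SUP n. \<Sum>i\<in>from_nat ` {..<n}. \<integral>\<^sup>+x. g i x \<partial>M)"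
    by (intro SUP_cong refl nn_integral_sum) auto
  finally show ?thesis
    unfolding infsum_ennreal_SUP_from_nat .
qed

lemma infsum_cmult_ennreal:
  fixes g :: "'a::countable \<Rightarrow> ennreal"
  shows "infsum (\<lambda>x. c * g x) UNIV = c * infsum g UNIV"
  unfolding infsum_ennreal_SUP_from_nat sum_distrib_left[symmetric]
  by (rule SUP_mult_left_ennreal[symmetric])

lemma infsum_add_ennreal:
  fixes g h :: "'a \<Rightarrow> ennreal"
  shows "infsum (\<lambda>x. g x + h x) A = infsum g A + infsum h A"
  by (rule infsum_add) simp_all

lemma infsum_sum_ennreal:
  fixes g :: "'i \<Rightarrow> 'a \<Rightarrow> ennreal"
  assumes "finite I"
  shows "infsum (\<lambda>x. \<Sum>i\<in>I. g i x) A = (\<Sum>i\<in>I. infsum (g i) A)"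
  using assms by (induction I rule: finite_induct) (simp_all add: infsum_add_ennreal)

section \<open>Dyadic cubes\<close>

lemma sidelen_pos [simp]: "sidelen k > 0"
  by (simp add: sidelen_def)

lemma sidelen_succ: "sidelen (k + 1) = sidelen k / 2"
  unfolding sidelen_def by (simp add: powr_diff)

lemma sidelen_eq_iff: "sidelen k = sidelen k' \<longleftrightarrow> k = k'"
  unfolding sidelen_def by (subst powr_inj) auto

lemma summable_grid_shift:
  "summable (\<lambda>n. 2 powr (- real_of_int (k + 1 + int n)) * (if \<omega> (k + 1 + int n) i then 1 else 0 :: real))"
proof (rule summable_comparison_test')
  show "summable (\<lambda>n. 2 powr (- real_of_int (k + 1)) * (1 / 2 :: real) ^ n)"
    by (intro summable_mult summable_geometric) auto
  have "2 powr (- real_of_int (k + 1 + int n)) = 2 powr (- real_of_int (k + 1)) * (1 / 2 :: real) ^ n"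
    for n :: nat
  proof -
    have "2 powr (- real_of_int (k + 1 + int n)) = 2 powr (- real_of_int (k + 1)) * 2 powr (- real n)"
      by (simp add: powr_add[symmetric])
    also have "2 powr (- real n) = (1 / 2 :: real) ^ n"
      by (simp add: powr_minus powr_realpow power_one_over inverse_eq_divide)
    finally show ?thesis .
  qed
  then show "norm (2 powr (- real_of_int (k + 1 + int n)) * (if \<omega> (k + 1 + int n) i then 1 else 0 :: real))
      \<le> 2 powr (- real_of_int (k + 1)) * (1 / 2) ^ n" for n
    by auto
qed

lemma grid_shift_succ:
  "grid_shift \<omega> k i = sidelen (k + 1) * of_bool (\<omega> (k + 1) i) + grid_shift \<omega> (k + 1) i"
proof -
  let ?a = "\<lambda>n. 2 powr (- real_of_int (k + 1 + int n)) * (if \<omega> (k + 1 + int n) i then 1 else 0 :: real)"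
  have "(\<Sum>n. ?a (Suc n)) = suminf ?a - ?a 0"
    by (rule suminf_split_head[OF summable_grid_shift])
  moreover have "(\<lambda>n. ?a (Suc n)) =
      (\<lambda>n. 2 powr (- real_of_int (k + 1 + 1 + int n)) * (if \<omega> (k + 1 + 1 + int n) i then 1 else 0))"
    by (simp add: add_ac)
  ultimately show ?thesis
    unfolding grid_shift_def sidelen_def by auto
qed

definition cube_index :: "(int \<Rightarrow> 'n \<Rightarrow> bool) \<Rightarrow> int \<Rightarrow> real^'n \<Rightarrow> 'n \<Rightarrow> int" where
  "cube_index \<omega> k x = (\<lambda>i. \<lfloor>(x $ i - grid_shift \<omega> k i) / sidelen k\<rfloor>)"

lemma mem_dcube_iff: "x \<in> dcube \<omega> k m \<longleftrightarrow> cube_index \<omega> k x = m"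
proof -
  have "cube_corner \<omega> k m i \<le> x $ i \<and> x $ i < cube_corner \<omega> k m i + sidelen k \<longleftrightarrow>
      \<lfloor>(x $ i - grid_shift \<omega> k i) / sidelen k\<rfloor> = m i" for i
    unfolding floor_eq_iff cube_corner_def
    by (simp add: pos_le_divide_eq pos_divide_less_eq algebra_simps)
  then show ?thesis
    unfolding dcube_def cube_index_def by (auto simp: fun_eq_iff)
qed

text \<open>In the next three definitions \<open>k\<close> is the generation of the parent:
  \<open>child_index \<omega> k m \<delta>\<close> is the child of the cube \<open>(k, m)\<close> lying in the upper half of the
  \<open>i\<close>-th side exactly when \<open>\<delta> i\<close>, and \<open>parent_index\<close>, \<open>child_type\<close> invert it.\<close>

definition parent_index :: "(int \<Rightarrow> 'n \<Rightarrow> bool) \<Rightarrow> int \<Rightarrow> ('n \<Rightarrow> int) \<Rightarrow> 'n \<Rightarrow> int" where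
  "parent_index \<omega> k m = (\<lambda>i. (m i - of_bool (\<omega> (k + 1) i)) div 2)"

definition child_type :: "(int \<Rightarrow> 'n \<Rightarrow> bool) \<Rightarrow> int \<Rightarrow> ('n \<Rightarrow> int) \<Rightarrow> 'n \<Rightarrow> bool" where
  "child_type \<omega> k m = (\<lambda>i. odd (m i - of_bool (\<omega> (k + 1) i)))"

definition child_index :: "(int \<Rightarrow> 'n \<Rightarrow> bool) \<Rightarrow> int \<Rightarrow> ('n \<Rightarrow> int) \<Rightarrow> ('n \<Rightarrow> bool) \<Rightarrow> 'n \<Rightarrow> int"
  where "child_index \<omega> k m \<delta> = (\<lambda>i. 2 * m i + of_bool (\<omega> (k + 1) i) + of_bool (\<delta> i))"

lemma child_index_parent: "child_index \<omega> k (parent_index \<omega> k m) (child_type \<omega> k m) = m"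
proof
  fix i
  have "m i - of_bool (\<omega> (k + 1) i) =
      2 * ((m i - of_bool (\<omega> (k + 1) i)) div 2) + of_bool (odd (m i - of_bool (\<omega> (k + 1) i)))"
    by (simp add: of_bool_odd_eq_mod_2)
  then show "child_index \<omega> k (parent_index \<omega> k m) (child_type \<omega> k m) i = m i"
    unfolding child_index_def parent_index_def child_type_def by linarith
qed

lemma parent_child_index [simp]: "parent_index \<omega> k (child_index \<omega> k m \<delta>) = m"
  and child_type_child_index [simp]: "child_type \<omega> k (child_index \<omega> k m \<delta>) = \<delta>"
  unfolding parent_index_def child_type_def child_index_def by (auto simp: fun_eq_iff)

lemma cube_index_parent: "cube_index \<omega> k x = parent_index \<omega> k (cube_index \<omega> (k + 1) x)"
proof
  fix i
  let ?w = "of_bool (\<omega> (k + 1) i) :: int"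
  have halve: "(X - (L * w + s)) / (2 * L) = ((X - s) / L - w) / 2" if "L > 0" for L w s X :: real
    using that by (simp add: field_simps)
  have "(x $ i - grid_shift \<omega> k i) / sidelen k
      = ((x $ i - grid_shift \<omega> (k + 1) i) / sidelen (k + 1) - of_int ?w) / real_of_int 2"
    unfolding grid_shift_succ[of \<omega> k] sidelen_succ[of k, symmetric]
    using halve[OF sidelen_pos[of "k + 1"]] by (simp add: sidelen_succ)
  then have "cube_index \<omega> k x i = \<lfloor>(x $ i - grid_shift \<omega> (k + 1) i) / sidelen (k + 1) - of_int ?w\<rfloor> div 2"
    unfolding cube_index_def by (simp only: floor_divide_real_eq_div[of 2] order.refl zero_le_numeral)
  then show "cube_index \<omega> k x i = parent_index \<omega> k (cube_index \<omega> (k + 1) x) i"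
    unfolding cube_index_def parent_index_def by simp
qed

lemma cube_index_coarser:
  assumes "k' \<le> k" and "cube_index \<omega> k x = cube_index \<omega> k y"
  shows "cube_index \<omega> k' x = cube_index \<omega> k' y"
proof -
  have "cube_index \<omega> k x = cube_index \<omega> k y \<longrightarrow> cube_index \<omega> k' x = cube_index \<omega> k' y"
    using assms(1)
  proof (induction k rule: int_ge_induct)
    case (step i)
    then show ?case
      by (metis cube_index_parent)
  qed simp
  then show ?thesis
    using assms(2) by blast
qed

lemma cube_corner_child:
  "cube_corner \<omega> (k + 1) (child_index \<omega> k m \<delta>) i = cube_corner \<omega> k m i + of_bool (\<delta> i) * (sidelen k / 2)"
  unfolding cube_corner_def child_index_def grid_shift_succ[of \<omega> k] sidelen_succ
  by (simp add: algebra_simps)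

lemma dcube_subset_parent: "dcube \<omega> (k + 1) m \<subseteq> dcube \<omega> k (parent_index \<omega> k m)"
  by (auto simp: mem_dcube_iff cube_index_parent[of \<omega> k])

definition cube_point :: "(int \<Rightarrow> 'n \<Rightarrow> bool) \<Rightarrow> int \<Rightarrow> ('n \<Rightarrow> int) \<Rightarrow> real^'n" where
  "cube_point \<omega> k m = (\<chi> i. cube_corner \<omega> k m i)"

lemma cube_point_mem: "cube_point \<omega> k m \<in> dcube \<omega> k m"
  unfolding cube_point_def dcube_def by simp

lemma cube_index_cube_point [simp]: "cube_index \<omega> k (cube_point \<omega> k m) = m"
  using cube_point_mem mem_dcube_iff by blast

lemma dcube_borel [measurable]: "dcube \<omega> k m \<in> sets borel"
  unfolding dcube_def by measurable

lemma dcube_lebesgue [measurable]: "dcube \<omega> k m \<in> sets lebesgue"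
  by (rule sets_completionI_sets) simp

lemma cube_vol_pos [simp]: "cube_vol TYPE('n::finite) k > 0"
  by (simp add: cube_vol_def)

lemma cube_vol_neq_zero [simp]: "cube_vol TYPE('n::finite) k \<noteq> 0"
  using cube_vol_pos[of k, where 'n = 'n] by linarith

lemma cube_vol_succ: "cube_vol TYPE('n::finite) (k + 1) = cube_vol TYPE('n) k / 2 ^ CARD('n)"
  by (simp add: cube_vol_def sidelen_succ power_divide)

lemma cube_vol_antimono: "k \<le> k' \<Longrightarrow> cube_vol TYPE('n::finite) k' \<le> cube_vol TYPE('n) k"
  unfolding cube_vol_def sidelen_def by (intro power_mono) auto

lemma emeasure_dcube_le: "emeasure lebesgue (dcube \<omega> k m) \<le> ennreal (cube_vol TYPE('n) k)"
  for \<omega> :: "int \<Rightarrow> 'n::finite \<Rightarrow> bool"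
proof -
  let ?a = "cube_point \<omega> k m" and ?b = "cube_point \<omega> k m + (\<chi> i. sidelen k)"
  have box: "dcube \<omega> k m \<subseteq> cbox ?a ?b"
    unfolding dcube_def cube_point_def by (auto simp: mem_box_cart less_imp_le)
  then have "emeasure lebesgue (dcube \<omega> k m) \<le> emeasure lebesgue (cbox ?a ?b)"
    by (rule emeasure_mono) simp
  also have "\<dots> = ennreal (measure lborel (cbox ?a ?b))"
    using emeasure_lborel_cbox_finite[of ?a ?b] by (simp add: emeasure_eq_ennreal_measure)
  also have "measure lborel (cbox ?a ?b) = (\<Prod>i\<in>UNIV. ?b $ i - ?a $ i)"
    by (rule content_cbox_cart) (use box cube_point_mem[of \<omega> k m] in blast)
  also have "(\<Prod>i\<in>UNIV. ?b $ i - ?a $ i) = cube_vol TYPE('n) k"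
    by (simp add: cube_vol_def)
  finally show ?thesis .
qed

section \<open>Haar functions and the energy identity\<close>

definition walsh :: "('n \<Rightarrow> bool) \<Rightarrow> ('n::finite \<Rightarrow> bool) \<Rightarrow> real" where
  "walsh \<epsilon> \<delta> = (\<Prod>i\<in>UNIV. if \<epsilon> i \<and> \<delta> i then -1 else 1)"

definition half_interval :: "real \<Rightarrow> real \<Rightarrow> bool \<Rightarrow> real set" where
  "half_interval a l b = (if b then {a + l / 2..<a + l} else {a..<a + l / 2})"

lemma haar1_eq_sum_halves:
  "haar1 a l e t = l powr (-1/2) * (\<Sum>b\<in>UNIV. (if e \<and> b then -1 else 1) * indicator (half_interval a l b) t)"
  unfolding haar1_def half_interval_def UNIV_bool by (auto simp: indicator_def)

lemma prod_sum_UNIV: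
  fixes g :: "'a::finite \<Rightarrow> 'b::finite \<Rightarrow> 'c::comm_semiring_1"
  shows "(\<Prod>i\<in>UNIV. \<Sum>b\<in>UNIV. g i b) = (\<Sum>\<delta>\<in>UNIV. \<Prod>i\<in>UNIV. g i (\<delta> i))"
  using prod_sum_PiE[of UNIV "\<lambda>_. UNIV" g] by (simp add: PiE_UNIV_domain)

lemma prod_indicator_cart:
  fixes S :: "'n::finite \<Rightarrow> real set"
  shows "(\<Prod>i\<in>UNIV. indicator (S i) (x $ i) :: real) = indicator {x. \<forall>i. x $ i \<in> S i} x"
  by (auto simp: indicator_def)

lemma haar_eq_sum_children:
  fixes \<omega> :: "int \<Rightarrow> 'n::finite \<Rightarrow> bool"
  shows "haar \<omega> k m \<epsilon> x = (sidelen k powr (-1/2)) ^ CARD('n) *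
     (\<Sum>\<delta>\<in>UNIV. walsh \<epsilon> \<delta> * indicator (dcube \<omega> (k + 1) (child_index \<omega> k m \<delta>)) x)"
proof -
  let ?I = "\<lambda>i b. half_interval (cube_corner \<omega> k m i) (sidelen k) b"
  let ?g = "\<lambda>i b. (if \<epsilon> i \<and> b then -1 else 1) * indicator (?I i b) (x $ i) :: real"
  have "haar \<omega> k m \<epsilon> x = (sidelen k powr (-1/2)) ^ CARD('n) * (\<Prod>i\<in>UNIV. \<Sum>b\<in>UNIV. ?g i b)"
    unfolding haar_def haar1_eq_sum_halves by (simp add: prod.distrib)
  also have "(\<Prod>i\<in>UNIV. \<Sum>b\<in>UNIV. ?g i b) = (\<Sum>\<delta>\<in>UNIV. \<Prod>i\<in>UNIV. ?g i (\<delta> i))"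
    by (rule prod_sum_UNIV)
  also have "\<dots> = (\<Sum>\<delta>\<in>UNIV. walsh \<epsilon> \<delta> * indicator (dcube \<omega> (k + 1) (child_index \<omega> k m \<delta>)) x)"
  proof (rule sum.cong[OF refl])
    fix \<delta> :: "'n \<Rightarrow> bool"
    have "{x. \<forall>i. x $ i \<in> ?I i (\<delta> i)} = dcube \<omega> (k + 1) (child_index \<omega> k m \<delta>)"
      unfolding dcube_def cube_corner_child sidelen_succ half_interval_def
      by (auto simp: of_bool_def split: if_splits)
    then show "(\<Prod>i\<in>UNIV. ?g i (\<delta> i)) = walsh \<epsilon> \<delta> * indicator (dcube \<omega> (k + 1) (child_index \<omega> k m \<delta>)) x"
      unfolding walsh_def prod.distrib prod_indicator_cart by simp
  qed
  finally show ?thesis .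
qed

lemma haar_trivial:
  fixes \<omega> :: "int \<Rightarrow> 'n::finite \<Rightarrow> bool"
  shows "haar \<omega> k m (\<lambda>_. False) x = (sidelen k powr (-1/2)) ^ CARD('n) * indicator (dcube \<omega> k m) x"
  unfolding haar_def haar1_def by (simp add: prod.distrib prod_indicator_cart dcube_def)

lemma walsh_orthogonal:
  fixes \<delta> \<delta>' :: "'n::finite \<Rightarrow> bool"
  shows "(\<Sum>\<epsilon>\<in>UNIV. walsh \<epsilon> \<delta> * walsh \<epsilon> \<delta>') = (if \<delta> = \<delta>' then 2 ^ CARD('n) else 0)"
proof -
  let ?g = "\<lambda>i b. (if b \<and> \<delta> i then -1 else 1) * (if b \<and> \<delta>' i then -1 else 1 :: real)"
  have "(\<Sum>\<epsilon>\<in>UNIV. walsh \<epsilon> \<delta> * walsh \<epsilon> \<delta>') = (\<Sum>\<epsilon>\<in>UNIV. \<Prod>i\<in>UNIV. ?g i (\<epsilon> i))"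
    unfolding walsh_def by (simp add: prod.distrib)
  also have "\<dots> = (\<Prod>i\<in>UNIV. \<Sum>b\<in>UNIV. ?g i b)"
    by (rule prod_sum_UNIV[symmetric])
  also have "\<dots> = (\<Prod>i\<in>UNIV. if \<delta> i = \<delta>' i then 2 else 0)"
    by (intro prod.cong refl) (auto simp: UNIV_bool)
  also have "\<dots> = (if \<delta> = \<delta>' then 2 ^ CARD('n) else 0)"
    by (auto simp: fun_eq_iff)
  finally show ?thesis .
qed

lemma sum_walsh_transform_sq:
  fixes a :: "('n::finite \<Rightarrow> bool) \<Rightarrow> real"
  shows "(\<Sum>\<epsilon>\<in>UNIV. (\<Sum>\<delta>\<in>UNIV. walsh \<epsilon> \<delta> * a \<delta>)\<^sup>2) = 2 ^ CARD('n) * (\<Sum>\<delta>\<in>UNIV. (a \<delta>)\<^sup>2)"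
proof -
  have "(\<Sum>\<epsilon>\<in>UNIV. (\<Sum>\<delta>\<in>UNIV. walsh \<epsilon> \<delta> * a \<delta>)\<^sup>2) =
      (\<Sum>\<epsilon>\<in>UNIV. \<Sum>\<delta>\<in>UNIV. \<Sum>\<delta>'\<in>UNIV. a \<delta> * a \<delta>' * (walsh \<epsilon> \<delta> * walsh \<epsilon> \<delta>'))"
    unfolding power2_eq_square sum_product by (simp only: mult_ac)
  also have "\<dots> = (\<Sum>\<delta>\<in>UNIV. \<Sum>\<delta>'\<in>UNIV. \<Sum>\<epsilon>\<in>UNIV. a \<delta> * a \<delta>' * (walsh \<epsilon> \<delta> * walsh \<epsilon> \<delta>'))"
    by (subst sum.swap) (rule sum.cong[OF refl], rule sum.swap)
  also have "\<dots> = (\<Sum>\<delta>\<in>UNIV. \<Sum>\<delta>'\<in>UNIV. a \<delta> * a \<delta>' * (\<Sum>\<epsilon>\<in>UNIV. walsh \<epsilon> \<delta> * walsh \<epsilon> \<delta>'))"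
    by (simp only: sum_distrib_left)
  also have "\<dots> = (\<Sum>\<delta>\<in>UNIV. \<Sum>\<delta>'\<in>UNIV. if \<delta> = \<delta>' then 2 ^ CARD('n) * (a \<delta>)\<^sup>2 else 0)"
    unfolding walsh_orthogonal by (intro sum.cong refl) (simp add: power2_eq_square)
  also have "\<dots> = 2 ^ CARD('n) * (\<Sum>\<delta>\<in>UNIV. (a \<delta>)\<^sup>2)"
    by (simp add: sum_distrib_left)
  finally show ?thesis .
qed

lemma haar_normalization_sq:
  "((sidelen k powr (-1/2)) ^ CARD('n::finite))\<^sup>2 = 1 / cube_vol TYPE('n) k"
proof -
  have "(sidelen k powr (-1/2))\<^sup>2 = sidelen k powr (real 2 * (-1/2))"
    using sidelen_pos[of k] by (intro powr_power) linarith
  also have "\<dots> = 1 / sidelen k"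
    by (simp add: powr_minus_divide less_imp_le)
  finally have "(sidelen k powr (-1/2))\<^sup>2 = 1 / sidelen k" .
  then show ?thesis
    unfolding cube_vol_def by (simp add: power_mult[symmetric] mult.commute[of _ 2] power_mult power_one_over)
qed

definition cube_integral :: "(int \<Rightarrow> 'n::finite \<Rightarrow> bool) \<Rightarrow> (real^'n \<Rightarrow> real) \<Rightarrow> int \<Rightarrow> ('n \<Rightarrow> int) \<Rightarrow> real"
  where "cube_integral \<omega> f k m = (\<integral>x. f x * indicator (dcube \<omega> k m) x \<partial>lebesgue)"

definition cube_energy :: "(int \<Rightarrow> 'n::finite \<Rightarrow> bool) \<Rightarrow> (real^'n \<Rightarrow> real) \<Rightarrow> int \<Rightarrow> ('n \<Rightarrow> int) \<Rightarrow> real"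
  where "cube_energy \<omega> f k m = (cube_integral \<omega> f k m)\<^sup>2 / cube_vol TYPE('n) k"

lemma cube_energy_nonneg: "cube_energy \<omega> f k m \<ge> 0"
  unfolding cube_energy_def by (intro divide_nonneg_pos) auto

lemma haar_coeff_sq_nonneg: "haar_coeff_sq \<omega> f k m \<ge> 0"
  unfolding haar_coeff_sq_def by (intro sum_nonneg) auto

lemma integral_mult_haar:
  fixes \<omega> :: "int \<Rightarrow> 'n::finite \<Rightarrow> bool"
  assumes f: "integrable lebesgue f"
  shows "(\<integral>x. f x * haar \<omega> k m \<epsilon> x \<partial>lebesgue) = (sidelen k powr (-1/2)) ^ CARD('n) *
      (\<Sum>\<delta>\<in>UNIV. walsh \<epsilon> \<delta> * cube_integral \<omega> f (k + 1) (child_index \<omega> k m \<delta>))"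
proof -
  have "(\<integral>x. f x * haar \<omega> k m \<epsilon> x \<partial>lebesgue) = (sidelen k powr (-1/2)) ^ CARD('n) *
      (\<integral>x. (\<Sum>\<delta>\<in>UNIV. walsh \<epsilon> \<delta> * (f x * indicator (dcube \<omega> (k + 1) (child_index \<omega> k m \<delta>)) x)) \<partial>lebesgue)"
    unfolding haar_eq_sum_children sum_distrib_left integral_mult_right_zero[symmetric]
    by (intro Bochner_Integration.integral_cong refl) (simp only: sum_distrib_left mult_ac)
  also have "(\<integral>x. (\<Sum>\<delta>\<in>UNIV. walsh \<epsilon> \<delta> * (f x * indicator (dcube \<omega> (k + 1) (child_index \<omega> k m \<delta>)) x)) \<partial>lebesgue)
      = (\<Sum>\<delta>\<in>UNIV. walsh \<epsilon> \<delta> * cube_integral \<omega> f (k + 1) (child_index \<omega> k m \<delta>))"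
    unfolding cube_integral_def integral_mult_right_zero[symmetric]
    by (rule Bochner_Integration.integral_sum)
      (auto intro!: integrable_real_mult_indicator f)
  finally show ?thesis .
qed

lemma integral_mult_haar_trivial:
  fixes \<omega> :: "int \<Rightarrow> 'n::finite \<Rightarrow> bool"
  shows "(\<integral>x. f x * haar \<omega> k m (\<lambda>_. False) x \<partial>lebesgue) =
      (sidelen k powr (-1/2)) ^ CARD('n) * cube_integral \<omega> f k m"
proof -
  have "(\<integral>x. f x * haar \<omega> k m (\<lambda>_. False) x \<partial>lebesgue) =
      (\<integral>x. (sidelen k powr (-1/2)) ^ CARD('n) * (f x * indicator (dcube \<omega> k m) x) \<partial>lebesgue)"
    unfolding haar_trivial by (simp only: mult_ac)
  then show ?thesis
    unfolding cube_integral_def by (simp only: integral_mult_right_zero)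
qed

lemma haar_coeff_sq_add_energy:
  fixes \<omega> :: "int \<Rightarrow> 'n::finite \<Rightarrow> bool"
  assumes f: "integrable lebesgue f"
  shows "haar_coeff_sq \<omega> f k m + cube_energy \<omega> f k m =
      (\<Sum>\<delta>\<in>UNIV. cube_energy \<omega> f (k + 1) (child_index \<omega> k m \<delta>))"
proof -
  let ?c = "(sidelen k powr (-1/2)) ^ CARD('n)"
  let ?h = "\<lambda>\<epsilon>. (\<integral>x. f x * haar \<omega> k m \<epsilon> x \<partial>lebesgue)\<^sup>2"
  have "(\<Sum>\<epsilon>\<in>UNIV. ?h \<epsilon>) = ?h (\<lambda>_. False) + (\<Sum>\<epsilon>\<in>UNIV - {\<lambda>_. False}. ?h \<epsilon>)"
    by (rule sum.remove) auto
  moreover have "UNIV - {\<lambda>_. False} = {\<epsilon>::'n \<Rightarrow> bool. \<epsilon> \<noteq> (\<lambda>_. False)}"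
    by auto
  moreover have "?h (\<lambda>_. False) = cube_energy \<omega> f k m"
    unfolding integral_mult_haar_trivial cube_energy_def power_mult_distrib haar_normalization_sq by simp
  ultimately have "haar_coeff_sq \<omega> f k m + cube_energy \<omega> f k m = (\<Sum>\<epsilon>\<in>UNIV. ?h \<epsilon>)"
    unfolding haar_coeff_sq_def by simp
  also have "\<dots> = ?c\<^sup>2 * (\<Sum>\<epsilon>\<in>UNIV. (\<Sum>\<delta>\<in>UNIV. walsh \<epsilon> \<delta> * cube_integral \<omega> f (k + 1) (child_index \<omega> k m \<delta>))\<^sup>2)"
    unfolding integral_mult_haar[OF f] power_mult_distrib by (rule sum_distrib_left[symmetric])
  also have "\<dots> = (\<Sum>\<delta>\<in>UNIV. cube_energy \<omega> f (k + 1) (child_index \<omega> k m \<delta>))"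
    unfolding sum_walsh_transform_sq haar_normalization_sq cube_energy_def cube_vol_succ
    by (auto simp: sum_divide_distrib sum_distrib_left mult_ac intro!: sum.cong)
  finally show ?thesis .
qed

lemma infsum_level_indicator:
  fixes h :: "('n::finite \<Rightarrow> int) \<Rightarrow> ennreal"
  shows "infsum (\<lambda>m. h m * indicator (dcube \<omega> k m) x) UNIV = h (cube_index \<omega> k x)"
proof -
  have "infsum (\<lambda>m. h m * indicator (dcube \<omega> k m) x) UNIV =
      infsum (\<lambda>m. h m * indicator (dcube \<omega> k m) x) {cube_index \<omega> k x}"
    by (rule infsum_cong_neutral) (auto simp: mem_dcube_iff)
  then show ?thesis
    by (simp add: mem_dcube_iff)
qed

lemma infsum_cubes_indicator:
  fixes h :: "int \<Rightarrow> ('n::finite \<Rightarrow> int) \<Rightarrow> ennreal"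
  shows "infsum (\<lambda>Q. h (fst Q) (snd Q) * indicator (dcube \<omega> (fst Q) (snd Q)) x) UNIV =
      infsum (\<lambda>k. h k (cube_index \<omega> k x)) UNIV"
proof -
  let ?g = "\<lambda>Q. h (fst Q) (snd Q) * indicator (dcube \<omega> (fst Q) (snd Q)) x"
  have "infsum ?g UNIV = infsum ?g (range (\<lambda>k. (k, cube_index \<omega> k x)))"
    by (rule infsum_cong_neutral) (auto simp: mem_dcube_iff indicator_def)
  also have "\<dots> = infsum (?g \<circ> (\<lambda>k. (k, cube_index \<omega> k x))) UNIV"
    by (rule infsum_reindex) (auto intro: inj_onI)
  also have "\<dots> = infsum (\<lambda>k. h k (cube_index \<omega> k x)) UNIV"
    by (rule infsum_cong) (simp add: mem_dcube_iff indicator_def)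
  finally show ?thesis .
qed

lemma borel_measurable_cube_index_pred [measurable]:
  "(\<lambda>x. if P (cube_index \<omega> k x) then 1 else 0 :: ennreal) \<in> borel_measurable lebesgue"
proof -
  have "(\<lambda>x. if P (cube_index \<omega> k x) then 1 else 0 :: ennreal) =
      (\<lambda>x. infsum (\<lambda>m. (if P m then 1 else 0) * indicator (dcube \<omega> k m) x) UNIV)"
    by (simp only: infsum_level_indicator)
  also have "\<dots> \<in> borel_measurable lebesgue"
    by measurable
  finally show ?thesis .
qed

lemma nn_integral_level_cubes:
  assumes [measurable]: "g \<in> borel_measurable lebesgue"
  shows "infsum (\<lambda>m. if P m then \<integral>\<^sup>+x. g x * indicator (dcube \<omega> k m) x \<partial>lebesgue else 0) UNIV =
      (\<integral>\<^sup>+x. g x * (if P (cube_index \<omega> k x) then 1 else 0) \<partial>lebesgue)"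
proof -
  have "infsum (\<lambda>m. if P m then \<integral>\<^sup>+x. g x * indicator (dcube \<omega> k m) x \<partial>lebesgue else 0) UNIV =
      infsum (\<lambda>m. \<integral>\<^sup>+x. g x * (if P m then 1 else 0) * indicator (dcube \<omega> k m) x \<partial>lebesgue) UNIV"
    by (intro infsum_cong) simp
  also have "\<dots> = (\<integral>\<^sup>+x. infsum (\<lambda>m. g x * (if P m then 1 else 0) * indicator (dcube \<omega> k m) x) UNIV \<partial>lebesgue)"
    by (rule nn_integral_infsum[symmetric]) measurable
  also have "\<dots> = (\<integral>\<^sup>+x. g x * (if P (cube_index \<omega> k x) then 1 else 0) \<partial>lebesgue)"
    by (simp only: infsum_level_indicator)
  finally show ?thesis .
qed

lemma nn_integral_cubes:
  assumes [measurable]: "g \<in> borel_measurable lebesgue"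
  shows "infsum (\<lambda>Q. if P (fst Q) (snd Q) then
        \<integral>\<^sup>+x. g x * indicator (dcube \<omega> (fst Q) (snd Q)) x \<partial>lebesgue else 0) UNIV =
      (\<integral>\<^sup>+x. g x * infsum (\<lambda>k. if P k (cube_index \<omega> k x) then 1 else 0) UNIV \<partial>lebesgue)"
proof -
  let ?h = "\<lambda>x k m. g x * (if P k m then 1 else 0)"
  have "infsum (\<lambda>Q. if P (fst Q) (snd Q) then
        \<integral>\<^sup>+x. g x * indicator (dcube \<omega> (fst Q) (snd Q)) x \<partial>lebesgue else 0) UNIV =
      infsum (\<lambda>Q. \<integral>\<^sup>+x. ?h x (fst Q) (snd Q) * indicator (dcube \<omega> (fst Q) (snd Q)) x \<partial>lebesgue) UNIV"
    by (intro infsum_cong) simp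
  also have "\<dots> = (\<integral>\<^sup>+x. infsum (\<lambda>Q. ?h x (fst Q) (snd Q) * indicator (dcube \<omega> (fst Q) (snd Q)) x) UNIV \<partial>lebesgue)"
    by (rule nn_integral_infsum[symmetric]) measurable
  also have "\<dots> = (\<integral>\<^sup>+x. g x * infsum (\<lambda>k. if P k (cube_index \<omega> k x) then 1 else 0) UNIV \<partial>lebesgue)"
    using infsum_cubes_indicator[where h = "?h _" and \<omega> = \<omega>] by (simp add: infsum_cmult_ennreal)
  finally show ?thesis .
qed

lemma infsum_children:
  fixes \<phi> :: "('n::finite \<Rightarrow> int) \<Rightarrow> ennreal"
  shows "infsum \<phi> UNIV = infsum (\<lambda>m. \<Sum>\<delta>\<in>UNIV. \<phi> (child_index \<omega> k m \<delta>)) UNIV"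
proof -
  have inj: "inj (\<lambda>m. child_index \<omega> k m \<delta>)" for \<delta>
    by (metis injI parent_child_index)
  have cover: "(\<Union>\<delta>\<in>UNIV. range (\<lambda>m. child_index \<omega> k m \<delta>)) = UNIV"
  proof (intro set_eqI iffI)
    fix m :: "'n \<Rightarrow> int"
    show "m \<in> (\<Union>\<delta>\<in>UNIV. range (\<lambda>m. child_index \<omega> k m \<delta>))"
      using child_index_parent[of \<omega> k m] by (metis UNIV_I UN_iff rangeI)
  qed simp
  have disjoint: "range (\<lambda>m. child_index \<omega> k m \<delta>) \<inter> range (\<lambda>m. child_index \<omega> k m \<delta>') = {}"
    if "\<delta> \<noteq> \<delta>'" for \<delta> \<delta>'
  proof -
    have "child_index \<omega> k m \<delta> \<noteq> child_index \<omega> k m' \<delta>'" for m m'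
      using that child_type_child_index by metis
    then show ?thesis
      by blast
  qed
  have "(\<Sum>\<delta>\<in>UNIV. infsum \<phi> (range (\<lambda>m. child_index \<omega> k m \<delta>))) =
      infsum \<phi> (\<Union>\<delta>\<in>UNIV. range (\<lambda>m. child_index \<omega> k m \<delta>))"
    by (rule sum_infsum) (simp_all add: disjoint)
  then have "infsum \<phi> UNIV = (\<Sum>\<delta>\<in>UNIV. infsum \<phi> (range (\<lambda>m. child_index \<omega> k m \<delta>)))"
    by (simp only: cover)
  also have "\<dots> = (\<Sum>\<delta>\<in>UNIV. infsum (\<lambda>m. \<phi> (child_index \<omega> k m \<delta>)) UNIV)"
    by (simp add: infsum_reindex[OF inj] o_def)
  also have "\<dots> = infsum (\<lambda>m. \<Sum>\<delta>\<in>UNIV. \<phi> (child_index \<omega> k m \<delta>)) UNIV"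
    by (rule infsum_sum_ennreal[symmetric]) simp
  finally show ?thesis .
qed

section \<open>The Calderon--Zygmund stopping time\<close>

locale dyadic_stopping =
  fixes \<omega> :: "int \<Rightarrow> 'n::finite \<Rightarrow> bool" and f :: "real^'n \<Rightarrow> real" and lam :: real
  assumes integrable_f: "integrable lebesgue f" and lam_pos: "lam > 0"
begin

definition mass :: "int \<Rightarrow> ('n \<Rightarrow> int) \<Rightarrow> real" where
  "mass k m = (\<integral>x. \<bar>f x\<bar> * indicator (dcube \<omega> k m) x \<partial>lebesgue)"

definition norm1 :: real where
  "norm1 = (\<integral>x. \<bar>f x\<bar> \<partial>lebesgue)"

definition stopped :: "int \<Rightarrow> ('n \<Rightarrow> int) \<Rightarrow> bool" where
  "stopped k m \<longleftrightarrow> lam * cube_vol TYPE('n) k < mass k m"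

text \<open>For \<open>k' \<le> k\<close>, \<open>cube_index \<omega> k' (cube_point \<omega> k m)\<close> is the index of the
  generation-\<open>k'\<close> ancestor of the cube \<open>(k, m)\<close>.\<close>

definition good :: "int \<Rightarrow> ('n \<Rightarrow> int) \<Rightarrow> bool" where
  "good k m \<longleftrightarrow> (\<forall>k'\<le>k. \<not> stopped k' (cube_index \<omega> k' (cube_point \<omega> k m)))"

definition maximal_stopped :: "int \<Rightarrow> ('n \<Rightarrow> int) \<Rightarrow> bool" where
  "maximal_stopped k m \<longleftrightarrow> stopped k m \<and> (\<forall>k'<k. \<not> stopped k' (cube_index \<omega> k' (cube_point \<omega> k m)))"

definition Omega :: "(real^'n) set" where
  "Omega = {x. \<exists>k. stopped k (cube_index \<omega> k x)}"

lemma borel_measurable_f [measurable]: "f \<in> borel_measurable lebesgue"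
  using integrable_f by (rule borel_measurable_integrable)

lemma integrable_abs_indicator: "integrable lebesgue (\<lambda>x. \<bar>f x\<bar> * indicator (dcube \<omega> k m) x)"
  by (intro integrable_real_mult_indicator integrable_abs integrable_f) simp

lemma mass_nonneg: "mass k m \<ge> 0"
  unfolding mass_def by (intro integral_nonneg_AE) auto

lemma norm1_nonneg: "norm1 \<ge> 0"
  unfolding norm1_def by (intro integral_nonneg_AE) auto

lemma mass_le_norm1: "mass k m \<le> norm1"
  unfolding mass_def norm1_def
  by (intro integral_mono integrable_abs_indicator integrable_abs integrable_f) (auto simp: indicator_def)

lemma mass_mono: "dcube \<omega> k' m' \<subseteq> dcube \<omega> k m \<Longrightarrow> mass k' m' \<le> mass k m"
  unfolding mass_def by (intro integral_mono integrable_abs_indicator) (auto simp: indicator_def)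

lemma ennreal_mult_mass:
  assumes "c \<ge> 0"
  shows "ennreal (c * mass k m) = (\<integral>\<^sup>+x. ennreal (c * \<bar>f x\<bar>) * indicator (dcube \<omega> k m) x \<partial>lebesgue)"
proof -
  have "(\<integral>\<^sup>+x. ennreal (c * \<bar>f x\<bar>) * indicator (dcube \<omega> k m) x \<partial>lebesgue) =
      (\<integral>\<^sup>+x. ennreal (c * (\<bar>f x\<bar> * indicator (dcube \<omega> k m) x)) \<partial>lebesgue)"
    by (intro nn_integral_cong) (simp split: split_indicator)
  also have "\<dots> = c * mass k m"
    unfolding mass_def using assms
    by (subst nn_integral_eq_integral) (auto intro: integrable_abs_indicator)
  finally show ?thesis ..
qed

lemma ennreal_mult_norm1:
  assumes "c \<ge> 0"
  shows "ennreal (c * norm1) = (\<integral>\<^sup>+x. ennreal (c * \<bar>f x\<bar>) \<partial>lebesgue)"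
  unfolding norm1_def using assms
  by (subst nn_integral_eq_integral) (auto intro: integrable_f)

lemma cube_energy_le_mass_sq: "cube_energy \<omega> f k m \<le> (mass k m)\<^sup>2 / cube_vol TYPE('n) k"
proof -
  have "\<bar>cube_integral \<omega> f k m\<bar> \<le> mass k m"
    unfolding cube_integral_def mass_def
    by (rule integral_abs_bound_integral[OF integrable_real_mult_indicator[OF _ integrable_f]
          integrable_abs_indicator]) (auto simp: abs_mult)
  then have "(cube_integral \<omega> f k m)\<^sup>2 \<le> (mass k m)\<^sup>2"
    by (metis abs_le_square_iff abs_of_nonneg mass_nonneg)
  then show ?thesis
    unfolding cube_energy_def by (simp add: divide_right_mono less_imp_le)
qed

lemma cube_index_ancestor:
  "cube_index \<omega> k x = m \<Longrightarrow> k' \<le> k \<Longrightarrow> cube_index \<omega> k' (cube_point \<omega> k m) = cube_index \<omega> k' x"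
  by (rule cube_index_coarser[of k' k]) auto

lemma good_iff:
  "cube_index \<omega> k x = m \<Longrightarrow> good k m \<longleftrightarrow> (\<forall>k'\<le>k. \<not> stopped k' (cube_index \<omega> k' x))"
  unfolding good_def using cube_index_ancestor by auto

lemma maximal_stopped_iff:
  "cube_index \<omega> k x = m \<Longrightarrow>
    maximal_stopped k m \<longleftrightarrow> stopped k m \<and> (\<forall>k'<k. \<not> stopped k' (cube_index \<omega> k' x))"
  unfolding maximal_stopped_def using cube_index_ancestor by auto

lemma good_not_stopped: "good k m \<Longrightarrow> \<not> stopped k m"
  unfolding good_def by (metis order_refl cube_index_cube_point)

lemma good_succ_iff: "good (k + 1) m \<longleftrightarrow> good k (parent_index \<omega> k m) \<and> \<not> stopped (k + 1) m"
proof -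
  let ?x = "cube_point \<omega> (k + 1) m"
  have parent: "cube_index \<omega> k ?x = parent_index \<omega> k m"
    using cube_index_parent[of \<omega> k ?x] by simp
  have "good (k + 1) m \<longleftrightarrow> (\<forall>k'\<le>k + 1. \<not> stopped k' (cube_index \<omega> k' ?x))"
    by (rule good_iff) simp
  also have "\<dots> \<longleftrightarrow> (\<forall>k'\<le>k. \<not> stopped k' (cube_index \<omega> k' ?x)) \<and> \<not> stopped (k + 1) m"
    by (auto simp: le_less zless_add1_eq)
  finally show ?thesis
    using good_iff[OF parent] by simp
qed

lemma maximal_stopped_succ_iff:
  "maximal_stopped (k + 1) m \<longleftrightarrow> good k (parent_index \<omega> k m) \<and> stopped (k + 1) m"
proof -
  let ?x = "cube_point \<omega> (k + 1) m"
  have parent: "cube_index \<omega> k ?x = parent_index \<omega> k m"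
    using cube_index_parent[of \<omega> k ?x] by simp
  have "maximal_stopped (k + 1) m \<longleftrightarrow> stopped (k + 1) m \<and> (\<forall>k'\<le>k. \<not> stopped k' (cube_index \<omega> k' ?x))"
    by (subst maximal_stopped_iff[OF cube_index_cube_point]) auto
  then show ?thesis
    using good_iff[OF parent] by auto
qed

lemma coarse_cubes_not_stopped: "\<exists>K. \<forall>k\<le>K. \<forall>m. \<not> stopped k m"
proof -
  obtain n :: nat where n: "norm1 / lam \<le> real n"
    using real_arch_simple by blast
  have "\<forall>k\<le>- int n. \<forall>m. \<not> stopped k m"
  proof (intro allI impI)
    fix k m assume k: "k \<le> - int n"
    have side: "sidelen (- int n) = 2 ^ n"
      unfolding sidelen_def by (simp add: powr_realpow)
    have "norm1 / lam \<le> sidelen (- int n)"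
      using n of_nat_less_two_power[of n, where ?'a = real] unfolding side by linarith
    also have "\<dots> \<le> cube_vol TYPE('n) (- int n)"
      unfolding cube_vol_def side using power_increasing[of 1 "CARD('n)" "2 ^ n :: real"]
      by (simp add: Suc_le_eq)
    also have "\<dots> \<le> cube_vol TYPE('n) k"
      by (rule cube_vol_antimono[OF k])
    finally have "norm1 \<le> lam * cube_vol TYPE('n) k"
      using lam_pos by (simp add: pos_divide_le_eq mult.commute)
    then show "\<not> stopped k m"
      unfolding stopped_def using mass_le_norm1[of k m] by linarith
  qed
  then show ?thesis ..
qed

lemma maximal_stopped_exists:
  assumes "x \<in> Omega"
  shows "\<exists>k. maximal_stopped k (cube_index \<omega> k x)"
proof -
  obtain k1 where k1: "stopped k1 (cube_index \<omega> k1 x)"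
    using assms unfolding Omega_def by auto
  obtain K where K: "\<forall>k\<le>K. \<forall>m. \<not> stopped k m"
    using coarse_cubes_not_stopped by blast
  let ?S = "{k \<in> {K..k1}. stopped k (cube_index \<omega> k x)}"
  have "K < k1"
    using k1 K by (meson not_le)
  then have "k1 \<in> ?S"
    using k1 by simp
  have fin: "finite ?S"
    by (rule finite_subset[of _ "{K..k1}"]) auto
  have min: "Min ?S \<in> ?S"
    by (rule Min_in[OF fin]) (use \<open>k1 \<in> ?S\<close> in blast)
  have least: "\<forall>k\<in>?S. Min ?S \<le> k"
    using Min_le[OF fin] by blast
  have "\<not> stopped k' (cube_index \<omega> k' x)" if "k' < Min ?S" for k'
  proof (cases "k' \<le> K")
    case True
    with K show ?thesis by simp
  next
    case False
    with that min have "k' \<in> {K..k1}"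
      by simp
    show ?thesis
    proof
      assume "stopped k' (cube_index \<omega> k' x)"
      with \<open>k' \<in> {K..k1}\<close> least have "Min ?S \<le> k'"
        by blast
      with that show False
        by simp
    qed
  qed
  with min have "maximal_stopped (Min ?S) (cube_index \<omega> (Min ?S) x)"
    unfolding maximal_stopped_iff[OF refl] by blast
  then show ?thesis ..
qed

lemma maximal_stopped_unique:
  "maximal_stopped k (cube_index \<omega> k x) \<Longrightarrow> maximal_stopped k' (cube_index \<omega> k' x) \<Longrightarrow> k = k'"
  using maximal_stopped_iff[OF refl, of k x] maximal_stopped_iff[OF refl, of k' x]
  by (metis linorder_neqE)

lemma good_not_maximal_stopped:
  "good k (cube_index \<omega> k x) \<Longrightarrow> k' \<le> k \<Longrightarrow> \<not> maximal_stopped k' (cube_index \<omega> k' x)"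
  using good_iff[OF refl, of k x] maximal_stopped_iff[OF refl, of k' x] by auto

lemma good_outside_Omega: "x \<notin> Omega \<Longrightarrow> good k (cube_index \<omega> k x)"
  using good_iff[OF refl, of k x] unfolding Omega_def by auto

lemma sets_Omega [measurable]: "Omega \<in> sets lebesgue"
proof -
  have "Omega = (\<Union>Q\<in>{Q. stopped (fst Q) (snd Q)}. dcube \<omega> (fst Q) (snd Q))"
    unfolding Omega_def by (auto simp: mem_dcube_iff)
  also have "\<dots> \<in> sets lebesgue"
    by (rule sets.countable_UN) auto
  finally show ?thesis .
qed

lemma sets_compl_Omega [measurable]: "- Omega \<in> sets lebesgue"
  using sets.compl_sets[OF sets_Omega] by (simp add: Compl_eq_Diff_UNIV)

lemma infsum_maximal_stopped:
  "infsum (\<lambda>k. if maximal_stopped k (cube_index \<omega> k x) then 1 else 0 :: ennreal) UNIV = indicator Omega x"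
proof (cases "x \<in> Omega")
  case True
  then obtain k0 where k0: "maximal_stopped k0 (cube_index \<omega> k0 x)"
    using maximal_stopped_exists by blast
  have "infsum (\<lambda>k. if maximal_stopped k (cube_index \<omega> k x) then 1 else 0 :: ennreal) UNIV =
      infsum (\<lambda>k. if maximal_stopped k (cube_index \<omega> k x) then 1 else 0 :: ennreal) {k0}"
    by (rule infsum_cong_neutral) (use k0 maximal_stopped_unique in auto)
  then show ?thesis
    using k0 True by simp
next
  case False
  then have "\<not> maximal_stopped k (cube_index \<omega> k x)" for k
    unfolding Omega_def maximal_stopped_def by auto
  then show ?thesis
    using False by simp
qed

lemma emeasure_stopped_cube_le:
  assumes "stopped k m"
  shows "emeasure lebesgue (dcube \<omega> k m) \<le> (\<integral>\<^sup>+x. ennreal (1 / lam * \<bar>f x\<bar>) * indicator (dcube \<omega> k m) x \<partial>lebesgue)"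
proof -
  have "cube_vol TYPE('n) k \<le> 1 / lam * mass k m"
    using assms lam_pos unfolding stopped_def by (simp add: field_simps)
  then have "emeasure lebesgue (dcube \<omega> k m) \<le> ennreal (1 / lam * mass k m)"
    by (meson emeasure_dcube_le ennreal_leI order.trans)
  also have "\<dots> = (\<integral>\<^sup>+x. ennreal (1 / lam * \<bar>f x\<bar>) * indicator (dcube \<omega> k m) x \<partial>lebesgue)"
    using lam_pos by (intro ennreal_mult_mass) simp
  finally show ?thesis .
qed

lemma emeasure_Omega_le: "emeasure lebesgue Omega \<le> ennreal (norm1 / lam)"
proof -
  let ?g = "\<lambda>x. ennreal (1 / lam * \<bar>f x\<bar>)"
  have "emeasure lebesgue Omega = (\<integral>\<^sup>+x. 1 * infsum (\<lambda>k. if maximal_stopped k (cube_index \<omega> k x) then 1 else 0) UNIV \<partial>lebesgue)"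
    by (simp add: infsum_maximal_stopped)
  also have "\<dots> = infsum (\<lambda>Q. if maximal_stopped (fst Q) (snd Q) then
      \<integral>\<^sup>+x. 1 * indicator (dcube \<omega> (fst Q) (snd Q)) x \<partial>lebesgue else 0) UNIV"
    by (rule nn_integral_cubes[symmetric]) simp
  also have "\<dots> \<le> infsum (\<lambda>Q. if maximal_stopped (fst Q) (snd Q) then
      \<integral>\<^sup>+x. ?g x * indicator (dcube \<omega> (fst Q) (snd Q)) x \<partial>lebesgue else 0) UNIV"
  proof (rule infsum_mono)
    fix Q :: "int \<times> ('n \<Rightarrow> int)"
    show "(if maximal_stopped (fst Q) (snd Q) then
          \<integral>\<^sup>+x. 1 * indicator (dcube \<omega> (fst Q) (snd Q)) x \<partial>lebesgue else 0) \<le>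
        (if maximal_stopped (fst Q) (snd Q) then
          \<integral>\<^sup>+x. ?g x * indicator (dcube \<omega> (fst Q) (snd Q)) x \<partial>lebesgue else 0)"
    proof (cases "maximal_stopped (fst Q) (snd Q)")
      case True
      then have "stopped (fst Q) (snd Q)"
        by (simp add: maximal_stopped_def)
      with True show ?thesis
        using emeasure_stopped_cube_le[of "fst Q" "snd Q"] by simp
    qed simp
  qed simp_all
  also have "\<dots> = (\<integral>\<^sup>+x. ?g x * infsum (\<lambda>k. if maximal_stopped k (cube_index \<omega> k x) then 1 else 0) UNIV \<partial>lebesgue)"
    by (rule nn_integral_cubes) simp
  also have "\<dots> = (\<integral>\<^sup>+x. ?g x * indicator Omega x \<partial>lebesgue)"
    by (simp only: infsum_maximal_stopped)
  also have "\<dots> \<le> (\<integral>\<^sup>+x. ?g x \<partial>lebesgue)"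
    by (intro nn_integral_mono) (simp add: indicator_def)
  also have "\<dots> = ennreal (norm1 / lam)"
    using lam_pos ennreal_mult_norm1[of "1 / lam"] by simp
  finally show ?thesis .
qed

definition good_coeffs :: "int \<Rightarrow> ennreal" where
  "good_coeffs k = infsum (\<lambda>m. if good k m then ennreal (haar_coeff_sq \<omega> f k m) else 0) UNIV"

definition good_energy :: "int \<Rightarrow> ennreal" where
  "good_energy k = infsum (\<lambda>m. if good k m then ennreal (cube_energy \<omega> f k m) else 0) UNIV"

definition stopped_energy :: "int \<Rightarrow> ennreal" where
  "stopped_energy k = infsum (\<lambda>m. if maximal_stopped k m then ennreal (cube_energy \<omega> f k m) else 0) UNIV"

text \<open>The energy identity summed over the good cubes of generation \<open>k\<close>: every child of a good
  cube is either good or maximal stopped.\<close>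

lemma good_energy_step: "good_coeffs k + good_energy k = good_energy (k + 1) + stopped_energy (k + 1)"
proof -
  let ?\<psi> = "\<lambda>m. if good k (parent_index \<omega> k m) then ennreal (cube_energy \<omega> f (k + 1) m) else 0"
  have "good_coeffs k + good_energy k =
      infsum (\<lambda>m. if good k m then ennreal (haar_coeff_sq \<omega> f k m + cube_energy \<omega> f k m) else 0) UNIV"
    unfolding good_coeffs_def good_energy_def infsum_add_ennreal[symmetric]
    by (intro infsum_cong) (simp add: haar_coeff_sq_nonneg cube_energy_nonneg)
  also have "\<dots> = infsum (\<lambda>m. \<Sum>\<delta>\<in>UNIV. ?\<psi> (child_index \<omega> k m \<delta>)) UNIV"
  proof (rule infsum_cong)
    fix m
    have "ennreal (haar_coeff_sq \<omega> f k m + cube_energy \<omega> f k m) =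
        (\<Sum>\<delta>\<in>UNIV. ennreal (cube_energy \<omega> f (k + 1) (child_index \<omega> k m \<delta>)))"
      by (simp add: haar_coeff_sq_add_energy[OF integrable_f] cube_energy_nonneg)
    then show "(if good k m then ennreal (haar_coeff_sq \<omega> f k m + cube_energy \<omega> f k m) else 0) =
        (\<Sum>\<delta>\<in>UNIV. ?\<psi> (child_index \<omega> k m \<delta>))"
      by simp
  qed
  also have "\<dots> = infsum ?\<psi> UNIV"
    by (rule infsum_children[symmetric])
  also have "\<dots> = good_energy (k + 1) + stopped_energy (k + 1)"
    unfolding good_energy_def stopped_energy_def infsum_add_ennreal[symmetric]
    by (intro infsum_cong) (simp add: good_succ_iff maximal_stopped_succ_iff)
  finally show ?thesis .
qed

lemma good_energy_telescope:
  "(\<Sum>i<n. good_coeffs (k + int i)) + good_energy k =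
    good_energy (k + int n) + (\<Sum>i<n. stopped_energy (k + int i + 1))"
proof (induction n)
  case (Suc n)
  have "(\<Sum>i<Suc n. good_coeffs (k + int i)) + good_energy k =
      ((\<Sum>i<n. good_coeffs (k + int i)) + good_energy k) + good_coeffs (k + int n)"
    by (simp add: ac_simps)
  also have "\<dots> = (good_coeffs (k + int n) + good_energy (k + int n)) + (\<Sum>i<n. stopped_energy (k + int i + 1))"
    unfolding Suc.IH by (simp add: ac_simps)
  also have "\<dots> = good_energy (k + int (Suc n)) + (\<Sum>i<Suc n. stopped_energy (k + int i + 1))"
    unfolding good_energy_step by (simp add: ac_simps)
  finally show ?case .
qed simp

lemma cube_energy_le_mass:
  assumes "\<not> stopped k (parent_index \<omega> k m)"
  shows "cube_energy \<omega> f (k + 1) m \<le> 2 ^ CARD('n) * lam * mass (k + 1) m"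
proof -
  have "mass (k + 1) m \<le> mass k (parent_index \<omega> k m)"
    by (rule mass_mono[OF dcube_subset_parent])
  also have "\<dots> \<le> 2 ^ CARD('n) * lam * cube_vol TYPE('n) (k + 1)"
    using assms unfolding stopped_def cube_vol_succ by simp
  finally have "(mass (k + 1) m)\<^sup>2 \<le> mass (k + 1) m * (2 ^ CARD('n) * lam * cube_vol TYPE('n) (k + 1))"
    unfolding power2_eq_square using mass_nonneg by (rule mult_left_mono)
  then have "(mass (k + 1) m)\<^sup>2 / cube_vol TYPE('n) (k + 1) \<le> 2 ^ CARD('n) * lam * mass (k + 1) m"
    by (simp add: pos_divide_le_eq mult_ac)
  with cube_energy_le_mass_sq show ?thesis
    by (rule order.trans)
qed

lemma energy_le_nn_integral:
  assumes "\<And>m. P m \<Longrightarrow> good (k - 1) (parent_index \<omega> (k - 1) m)"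
  shows "infsum (\<lambda>m. if P m then ennreal (cube_energy \<omega> f k m) else 0) UNIV \<le>
    (\<integral>\<^sup>+x. ennreal (2 ^ CARD('n) * lam * \<bar>f x\<bar>) * (if P (cube_index \<omega> k x) then 1 else 0) \<partial>lebesgue)"
proof -
  let ?g = "\<lambda>x. ennreal (2 ^ CARD('n) * lam * \<bar>f x\<bar>)"
  have "infsum (\<lambda>m. if P m then ennreal (cube_energy \<omega> f k m) else 0) UNIV \<le>
      infsum (\<lambda>m. if P m then \<integral>\<^sup>+x. ?g x * indicator (dcube \<omega> k m) x \<partial>lebesgue else 0) UNIV"
  proof (rule infsum_mono)
    fix m
    have "ennreal (cube_energy \<omega> f k m) \<le> \<integral>\<^sup>+x. ?g x * indicator (dcube \<omega> k m) x \<partial>lebesgue" if "P m"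
    proof -
      have "\<not> stopped (k - 1) (parent_index \<omega> (k - 1) m)"
        using assms[OF that] by (rule good_not_stopped)
      then have "cube_energy \<omega> f k m \<le> 2 ^ CARD('n) * lam * mass k m"
        using cube_energy_le_mass[of "k - 1" m] by simp
      then show ?thesis
        using lam_pos by (subst ennreal_mult_mass[symmetric]) (auto intro: ennreal_leI)
    qed
    then show "(if P m then ennreal (cube_energy \<omega> f k m) else 0) \<le>
        (if P m then \<integral>\<^sup>+x. ?g x * indicator (dcube \<omega> k m) x \<partial>lebesgue else 0)"
      by simp
  qed simp_all
  also have "\<dots> = (\<integral>\<^sup>+x. ?g x * (if P (cube_index \<omega> k x) then 1 else 0) \<partial>lebesgue)"
    by (rule nn_integral_level_cubes) simp
  finally show ?thesis .
qed

lemma frontier_indicator_le_one: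
  "(if good (k + int n) (cube_index \<omega> (k + int n) x) then 1 else 0) +
    (\<Sum>i<n. if maximal_stopped (k + int i + 1) (cube_index \<omega> (k + int i + 1) x) then 1 else 0)
    \<le> (1 :: ennreal)"
proof (cases "\<exists>i<n. maximal_stopped (k + int i + 1) (cube_index \<omega> (k + int i + 1) x)")
  case True
  then obtain i0 where i0: "i0 < n" "maximal_stopped (k + int i0 + 1) (cube_index \<omega> (k + int i0 + 1) x)"
    by blast
  have "\<not> good (k + int n) (cube_index \<omega> (k + int n) x)"
  proof
    assume "good (k + int n) (cube_index \<omega> (k + int n) x)"
    from good_not_maximal_stopped[OF this, of "k + int i0 + 1"] i0 show False
      by simp
  qed
  moreover have "maximal_stopped (k + int i + 1) (cube_index \<omega> (k + int i + 1) x) \<longleftrightarrow> i = i0" for i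
    using maximal_stopped_unique[OF i0(2), of "k + int i + 1"] i0(2) by auto
  ultimately show ?thesis
    using i0(1) by simp
qed simp

lemma telescope_remainder_le:
  "good_energy (k + int n) + (\<Sum>i<n. stopped_energy (k + int i + 1)) \<le> ennreal (2 ^ CARD('n) * lam * norm1)"
proof -
  let ?g = "\<lambda>x. ennreal (2 ^ CARD('n) * lam * \<bar>f x\<bar>)"
  let ?G = "\<lambda>x. if good (k + int n) (cube_index \<omega> (k + int n) x) then 1 else 0 :: ennreal"
  let ?S = "\<lambda>i x. if maximal_stopped (k + int i + 1) (cube_index \<omega> (k + int i + 1) x) then 1 else 0 :: ennreal"
  have good: "good_energy k' \<le> (\<integral>\<^sup>+x. ?g x * (if good k' (cube_index \<omega> k' x) then 1 else 0) \<partial>lebesgue)" for k'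
    unfolding good_energy_def using good_succ_iff[of "k' - 1"] by (intro energy_le_nn_integral) simp
  have stopped: "stopped_energy k' \<le>
      (\<integral>\<^sup>+x. ?g x * (if maximal_stopped k' (cube_index \<omega> k' x) then 1 else 0) \<partial>lebesgue)" for k'
    unfolding stopped_energy_def using maximal_stopped_succ_iff[of "k' - 1"]
    by (intro energy_le_nn_integral) simp
  have "good_energy (k + int n) + (\<Sum>i<n. stopped_energy (k + int i + 1))
      \<le> (\<integral>\<^sup>+x. ?g x * ?G x \<partial>lebesgue) + (\<Sum>i<n. \<integral>\<^sup>+x. ?g x * ?S i x \<partial>lebesgue)"
    by (intro add_mono sum_mono good stopped)
  also have "\<dots> = (\<integral>\<^sup>+x. ?g x * ?G x + (\<Sum>i<n. ?g x * ?S i x) \<partial>lebesgue)"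
    by (subst nn_integral_sum[symmetric], measurable, subst nn_integral_add[symmetric]) measurable
  also have "\<dots> \<le> (\<integral>\<^sup>+x. ?g x \<partial>lebesgue)"
  proof (rule nn_integral_mono)
    fix x
    have "?g x * ?G x + (\<Sum>i<n. ?g x * ?S i x) = ?g x * (?G x + (\<Sum>i<n. ?S i x))"
      by (simp add: distrib_left sum_distrib_left)
    also have "\<dots> \<le> ?g x * 1"
      by (intro mult_left_mono frontier_indicator_le_one) simp
    finally show "?g x * ?G x + (\<Sum>i<n. ?g x * ?S i x) \<le> ?g x"
      by simp
  qed
  also have "\<dots> = ennreal (2 ^ CARD('n) * lam * norm1)"
    using lam_pos by (subst ennreal_mult_norm1) simp_all
  finally show ?thesis .
qed

lemma infsum_good_coeffs_le:
  "infsum (\<lambda>Q. if good (fst Q) (snd Q) then ennreal (haar_coeff_sq \<omega> f (fst Q) (snd Q)) else 0) UNIV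
    \<le> ennreal (2 ^ CARD('n) * lam * norm1)"
proof (rule infsum_le_finite_sums)
  let ?c = "\<lambda>k m. if good k m then ennreal (haar_coeff_sq \<omega> f k m) else 0"
  fix F :: "(int \<times> ('n \<Rightarrow> int)) set" assume fin: "finite F"
  define k0 where "k0 = Min (insert 0 (fst ` F))"
  define n where "n = nat (Max (insert 0 (fst ` F)) - k0) + 1"
  have cover: "F \<subseteq> (\<lambda>i. k0 + int i) ` {..<n} \<times> snd ` F"
  proof
    fix Q assume "Q \<in> F"
    then have "k0 \<le> fst Q" and "fst Q \<le> Max (insert 0 (fst ` F))"
      unfolding k0_def using fin by auto
    then have "fst Q = k0 + int (nat (fst Q - k0))" and "nat (fst Q - k0) < n"
      unfolding n_def by auto
    with \<open>Q \<in> F\<close> show "Q \<in> (\<lambda>i. k0 + int i) ` {..<n} \<times> snd ` F"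
      by (metis image_eqI lessThan_iff mem_Times_iff)
  qed
  have "(\<Sum>Q\<in>F. ?c (fst Q) (snd Q)) \<le> (\<Sum>Q\<in>(\<lambda>i. k0 + int i) ` {..<n} \<times> snd ` F. ?c (fst Q) (snd Q))"
    by (rule sum_mono2) (use fin cover in auto)
  also have "\<dots> = (\<Sum>k\<in>(\<lambda>i. k0 + int i) ` {..<n}. \<Sum>m\<in>snd ` F. ?c k m)"
    by (subst sum.cartesian_product) (simp add: case_prod_beta)
  also have "\<dots> = (\<Sum>i<n. \<Sum>m\<in>snd ` F. ?c (k0 + int i) m)"
    by (subst sum.reindex) (auto intro: inj_onI)
  also have "\<dots> \<le> (\<Sum>i<n. good_coeffs (k0 + int i))"
    unfolding good_coeffs_def by (intro sum_mono sum_le_infsum_ennreal) (use fin in auto)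
  also have "\<dots> \<le> (\<Sum>i<n. good_coeffs (k0 + int i)) + good_energy k0"
    by simp
  also have "\<dots> \<le> ennreal (2 ^ CARD('n) * lam * norm1)"
    unfolding good_energy_telescope by (rule telescope_remainder_le)
  finally show "(\<Sum>Q\<in>F. ?c (fst Q) (snd Q)) \<le> ennreal (2 ^ CARD('n) * lam * norm1)" .
qed simp

end

section \<open>The dyadic square function\<close>

definition haar_term :: "(int \<Rightarrow> 'n::finite \<Rightarrow> bool) \<Rightarrow> (real^'n \<Rightarrow> real) \<Rightarrow> int \<times> ('n \<Rightarrow> int) \<Rightarrow> real^'n \<Rightarrow> ennreal"
  where "haar_term \<omega> f P x = ennreal (haar_coeff_sq \<omega> f (fst P) (snd P) / cube_vol TYPE('n) (fst P)) *
    indicator (dcube \<omega> (fst P) (snd P)) x"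

definition square_function_sq :: "(int \<Rightarrow> 'n::finite \<Rightarrow> bool) \<Rightarrow> (real^'n \<Rightarrow> real) \<Rightarrow> real^'n \<Rightarrow> ennreal"
  where "square_function_sq \<omega> f x = infsum (\<lambda>P. haar_term \<omega> f P x) UNIV"

lemma borel_measurable_haar_term [measurable]: "haar_term \<omega> f P \<in> borel_measurable lebesgue"
  unfolding haar_term_def by measurable

lemma borel_measurable_square_function_sq [measurable]:
  "square_function_sq \<omega> f \<in> borel_measurable lebesgue"
  unfolding square_function_sq_def by measurable

lemma nn_integral_haar_term_le:
  "(\<integral>\<^sup>+x. haar_term \<omega> f P x \<partial>lebesgue) \<le> ennreal (haar_coeff_sq \<omega> f (fst P) (snd P))"
  for \<omega> :: "int \<Rightarrow> 'n::finite \<Rightarrow> bool"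
proof -
  let ?c = "haar_coeff_sq \<omega> f (fst P) (snd P)" and ?v = "cube_vol TYPE('n) (fst P)"
  have "(\<integral>\<^sup>+x. haar_term \<omega> f P x \<partial>lebesgue) = ennreal (?c / ?v) * emeasure lebesgue (dcube \<omega> (fst P) (snd P))"
    unfolding haar_term_def by (simp add: nn_integral_cmult_indicator)
  also have "\<dots> \<le> ennreal (?c / ?v) * ennreal ?v"
    by (intro mult_left_mono emeasure_dcube_le) simp
  also have "\<dots> = ennreal (?c / ?v * ?v)"
    by (rule ennreal_mult[symmetric]) (simp_all add: haar_coeff_sq_nonneg less_imp_le)
  finally show ?thesis
    by simp
qed

lemma borel_measurable_esqrt [measurable]: "esqrt \<in> borel_measurable borel"
  unfolding esqrt_def by measurable

lemma esqrt_mono: "a \<le> b \<Longrightarrow> esqrt a \<le> esqrt b"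
  unfolding esqrt_def
  by (auto simp: top_unique intro!: ennreal_leI real_sqrt_le_mono enn2real_mono simp flip: top.not_eq_extremum)

lemma one_le_mult_if_less_esqrt:
  assumes "l > 0" and "ennreal l < esqrt G"
  shows "1 \<le> ennreal (1 / l\<^sup>2) * G"
proof (cases "G = top")
  case True
  then show ?thesis
    using assms(1) by (simp add: ennreal_mult_top)
next
  case False
  then have G: "G = ennreal (enn2real G)"
    by (simp add: ennreal_enn2real_if)
  have "l < sqrt (enn2real G)"
    using assms False unfolding esqrt_def by (simp add: ennreal_less_iff)
  then have "l\<^sup>2 < (sqrt (enn2real G))\<^sup>2"
    using assms(1) by (intro power_strict_mono) auto
  then have "l\<^sup>2 < enn2real G"
    by simp
  then have "1 \<le> 1 / l\<^sup>2 * enn2real G"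
    using assms(1) by (simp add: field_simps)
  then show ?thesis
    using assms(1) by (subst G) (simp add: ennreal_mult[symmetric] ennreal_1[symmetric] ennreal_leI del: ennreal_1)
qed

context dyadic_stopping
begin

lemma nn_integral_square_function_sq_outside_Omega:
  "(\<integral>\<^sup>+x. square_function_sq \<omega> f x * indicator (- Omega) x \<partial>lebesgue) \<le> ennreal (2 ^ CARD('n) * lam * norm1)"
proof -
  have "(\<integral>\<^sup>+x. square_function_sq \<omega> f x * indicator (- Omega) x \<partial>lebesgue) =
      (\<integral>\<^sup>+x. infsum (\<lambda>P. indicator (- Omega) x * haar_term \<omega> f P x) UNIV \<partial>lebesgue)"
    unfolding square_function_sq_def infsum_cmult_ennreal by (simp add: mult.commute)
  also have "\<dots> = infsum (\<lambda>P. \<integral>\<^sup>+x. indicator (- Omega) x * haar_term \<omega> f P x \<partial>lebesgue) UNIV"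
    by (rule nn_integral_infsum) measurable
  also have "\<dots> \<le> infsum (\<lambda>P. if good (fst P) (snd P) then ennreal (haar_coeff_sq \<omega> f (fst P) (snd P)) else 0) UNIV"
  proof (rule infsum_mono)
    fix P :: "int \<times> ('n \<Rightarrow> int)"
    show "(\<integral>\<^sup>+x. indicator (- Omega) x * haar_term \<omega> f P x \<partial>lebesgue) \<le>
        (if good (fst P) (snd P) then ennreal (haar_coeff_sq \<omega> f (fst P) (snd P)) else 0)"
    proof (cases "good (fst P) (snd P)")
      case False
      then have zero: "indicator (- Omega) x * haar_term \<omega> f P x = 0" for x
        using good_outside_Omega[of x "fst P"] unfolding haar_term_def
        by (auto simp: mem_dcube_iff indicator_def)
      show ?thesis
        by (simp only: zero nn_integral_const) (use False in simp)
    next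
      case True
      have "(\<integral>\<^sup>+x. indicator (- Omega) x * haar_term \<omega> f P x \<partial>lebesgue) \<le> (\<integral>\<^sup>+x. haar_term \<omega> f P x \<partial>lebesgue)"
        by (intro nn_integral_mono) (simp add: indicator_def)
      with True show ?thesis
        using nn_integral_haar_term_le[of \<omega> f P] by simp
    qed
  qed simp_all
  also have "\<dots> \<le> ennreal (2 ^ CARD('n) * lam * norm1)"
    by (rule infsum_good_coeffs_le)
  finally show ?thesis .
qed

lemma emeasure_square_function_gt_le:
  "emeasure lebesgue {x. ennreal lam < esqrt (square_function_sq \<omega> f x)} \<le>
    ennreal ((1 + 2 ^ CARD('n)) * norm1 / lam)"
proof -
  let ?c = "ennreal (1 / lam\<^sup>2)"
  define B where "B = {x \<in> - Omega. 1 \<le> ?c * square_function_sq \<omega> f x}"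
  have [measurable]: "B \<in> sets lebesgue"
    unfolding B_def by measurable
  have "{x. ennreal lam < esqrt (square_function_sq \<omega> f x)} \<subseteq> Omega \<union> B"
    unfolding B_def using one_le_mult_if_less_esqrt[OF lam_pos] by auto
  then have "emeasure lebesgue {x. ennreal lam < esqrt (square_function_sq \<omega> f x)} \<le> emeasure lebesgue (Omega \<union> B)"
    by (rule emeasure_mono) measurable
  also have "\<dots> \<le> emeasure lebesgue Omega + emeasure lebesgue B"
    by (rule emeasure_subadditive) measurable
  also have "\<dots> \<le> ennreal (norm1 / lam) + ?c * ennreal (2 ^ CARD('n) * lam * norm1)"
  proof (rule add_mono[OF emeasure_Omega_le])
    have "emeasure lebesgue B \<le> ?c * (\<integral>\<^sup>+x. square_function_sq \<omega> f x * indicator (- Omega) x \<partial>lebesgue)"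
      unfolding B_def by (rule nn_integral_Markov_inequality) measurable
    also have "\<dots> \<le> ?c * ennreal (2 ^ CARD('n) * lam * norm1)"
      by (intro mult_left_mono nn_integral_square_function_sq_outside_Omega) simp
    finally show "emeasure lebesgue B \<le> ?c * ennreal (2 ^ CARD('n) * lam * norm1)" .
  qed
  also have "\<dots> = ennreal (norm1 / lam + 1 / lam\<^sup>2 * (2 ^ CARD('n) * lam * norm1))"
    using lam_pos norm1_nonneg by (simp add: ennreal_mult[symmetric])
  also have "norm1 / lam + 1 / lam\<^sup>2 * (2 ^ CARD('n) * lam * norm1) = (1 + 2 ^ CARD('n)) * norm1 / lam"
    using lam_pos by (simp add: field_simps power2_eq_square)
  finally show ?thesis .
qed

end

theorem square_function_weak_type:
  fixes \<omega> :: "int \<Rightarrow> 'n::finite \<Rightarrow> bool"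
  assumes "integrable lebesgue f" and "lam > 0"
  shows "emeasure lebesgue {x. ennreal lam < esqrt (square_function_sq \<omega> f x)} \<le>
    ennreal ((1 + 2 ^ CARD('n)) * (\<integral>x. \<bar>f x\<bar> \<partial>lebesgue) / lam)"
proof -
  interpret dyadic_stopping \<omega> f lam
    using assms by unfold_locales
  show ?thesis
    using emeasure_square_function_gt_le unfolding norm1_def .
qed

section \<open>Comparison of \<open>S\<^sub>j\<close> with the square function\<close>

definition ancestor_pairs :: "(int \<Rightarrow> 'n::finite \<Rightarrow> bool) \<Rightarrow> nat \<Rightarrow> ((int \<times> ('n \<Rightarrow> int)) \<times> (int \<times> ('n \<Rightarrow> int))) set"
  where "ancestor_pairs \<omega> j = {((k, m), (k', m')). dcube \<omega> k' m' \<subseteq> dcube \<omega> k m \<and>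
    sidelen k' = 2 powr (- real j) * sidelen k}"

lemma Sj_eq: "Sj \<omega> j f x = esqrt (infsum (\<lambda>QP. haar_term \<omega> f (snd QP) x) (ancestor_pairs \<omega> j))"
  unfolding Sj_def ancestor_pairs_def haar_term_def
  by (rule arg_cong[where f = esqrt], rule infsum_cong) (simp add: case_prod_beta)

lemma inj_on_snd_ancestor_pairs: "inj_on snd (ancestor_pairs \<omega> j)"
proof (rule inj_onI)
  fix QP QP' assume QP: "QP \<in> ancestor_pairs \<omega> j" "QP' \<in> ancestor_pairs \<omega> j" and "snd QP = snd QP'"
  then obtain k m k' m' P where QP_eq: "QP = ((k, m), P)" "QP' = ((k', m'), P)"
    by (metis prod.collapse)
  have "sidelen k = sidelen k'"
    using QP unfolding QP_eq ancestor_pairs_def by auto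
  then have "k = k'"
    by (simp add: sidelen_eq_iff)
  have "cube_point \<omega> (fst P) (snd P) \<in> dcube \<omega> k m \<inter> dcube \<omega> k' m'"
    using QP cube_point_mem[of \<omega> "fst P" "snd P"] unfolding QP_eq ancestor_pairs_def by auto
  then have "m = m'"
    using \<open>k = k'\<close> by (metis IntE mem_dcube_iff)
  with \<open>k = k'\<close> show "QP = QP'"
    unfolding QP_eq by simp
qed

lemma Sj_le_square_function: "Sj \<omega> j f x \<le> esqrt (square_function_sq \<omega> f x)"
proof -
  have "infsum (\<lambda>QP. haar_term \<omega> f (snd QP) x) (ancestor_pairs \<omega> j) =
      infsum (\<lambda>P. haar_term \<omega> f P x) (snd ` ancestor_pairs \<omega> j)"
    by (simp add: infsum_reindex[OF inj_on_snd_ancestor_pairs] o_def)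
  also have "\<dots> \<le> square_function_sq \<omega> f x"
    unfolding square_function_sq_def by (rule infsum_mono_neutral) simp_all
  finally show ?thesis
    unfolding Sj_eq by (rule esqrt_mono)
qed

lemma borel_measurable_Sj [measurable]: "Sj \<omega> j f \<in> borel_measurable lebesgue"
proof -
  have "Sj \<omega> j f = (\<lambda>x. esqrt (infsum (\<lambda>QP. if QP \<in> ancestor_pairs \<omega> j then haar_term \<omega> f (snd QP) x else 0) UNIV))"
    unfolding Sj_eq by (intro ext arg_cong[where f = esqrt] infsum_cong_neutral) auto
  also have "\<dots> \<in> borel_measurable lebesgue"
    by measurable
  finally show ?thesis .
qed

lemma Sj_weak_type:
  fixes \<omega> :: "int \<Rightarrow> 'n::finite \<Rightarrow> bool"
  assumes f: "integrable lebesgue f" and l: "l > 0"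
  shows "ennreal l * emeasure lebesgue {x. ennreal l < Sj \<omega> j f x} \<le>
    ennreal ((1 + 2 ^ CARD('n)) * (\<integral>x. \<bar>f x\<bar> \<partial>lebesgue))"
proof -
  let ?C = "1 + 2 ^ CARD('n) :: real" and ?N = "\<integral>x. \<bar>f x\<bar> \<partial>lebesgue"
  have "{x \<in> space lebesgue. ennreal l < esqrt (square_function_sq \<omega> f x)} \<in> sets lebesgue"
    by measurable
  moreover have "{x. ennreal l < Sj \<omega> j f x} \<subseteq> {x. ennreal l < esqrt (square_function_sq \<omega> f x)}"
    using Sj_le_square_function order_less_le_trans by blast
  ultimately have "emeasure lebesgue {x. ennreal l < Sj \<omega> j f x} \<le> ennreal (?C * ?N / l)"
    using emeasure_mono square_function_weak_type[OF f l, of \<omega>] order_trans by fastforce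
  then have "ennreal l * emeasure lebesgue {x. ennreal l < Sj \<omega> j f x} \<le> ennreal l * ennreal (?C * ?N / l)"
    by (rule mult_left_mono) simp
  also have "\<dots> = ennreal (?C * ?N)"
    using l by (subst ennreal_mult[symmetric]) (auto intro: integral_nonneg_AE)
  finally show ?thesis .
qed

theorem proposition8p3:
  fixes \<omega> :: "int \<Rightarrow> 'n::finite \<Rightarrow> bool"
  shows "\<exists>C>0. \<forall>j::nat. \<forall>f :: real^'n \<Rightarrow> real. integrable lebesgue f \<longrightarrow>
           (\<forall>l>0. {x. ennreal l < Sj \<omega> j f x} \<in> sets lebesgue) \<and>
           (SUP l\<in>{0<..}. ennreal l * emeasure lebesgue {x. ennreal l < Sj \<omega> j f x})
             \<le> ennreal (C * (1 + real j) * (\<integral>x. \<bar>f x\<bar> \<partial>lebesgue))"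
proof (intro exI[of _ "1 + 2 ^ CARD('n)"] conjI allI impI)
  fix j :: nat and f :: "real^'n \<Rightarrow> real" and l :: real
  have "{x \<in> space lebesgue. ennreal l < Sj \<omega> j f x} \<in> sets lebesgue"
    by measurable
  then show "{x. ennreal l < Sj \<omega> j f x} \<in> sets lebesgue"
    by simp
next
  fix j :: nat and f :: "real^'n \<Rightarrow> real"
  assume f: "integrable lebesgue f"
  have "(0::real) < 1 + 2 ^ CARD('n)"
    by (simp add: add_pos_pos)
  then have bound: "(1 + 2 ^ CARD('n)) * (\<integral>x. \<bar>f x\<bar> \<partial>lebesgue) \<le>
      (1 + 2 ^ CARD('n)) * (1 + real j) * (\<integral>x. \<bar>f x\<bar> \<partial>lebesgue)"
    by (intro mult_right_mono integral_nonneg_AE) (auto simp: mult_le_cancel_left1)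
  then show "(SUP l\<in>{0<..}. ennreal l * emeasure lebesgue {x. ennreal l < Sj \<omega> j f x})
      \<le> ennreal ((1 + 2 ^ CARD('n)) * (1 + real j) * (\<integral>x. \<bar>f x\<bar> \<partial>lebesgue))"
    by (intro SUP_least order_trans[OF Sj_weak_type[OF f] ennreal_leI[OF bound]]) simp
qed (simp add: add_pos_pos)

end
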